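(* Let $a,b\ge1$ be coprime integers with $a\le b$, write $P_{a/b}(u,v,w)=\sum_{i,j} A_{ij}\,u^iv^jw^{a+b-1-i-j}$, and let $\Delta_{a/b}=\operatorname{Conv}\{(i,j)\in\mathbb{Z}^2: A_{ij}\neq 0\}\subset\mathbb{R}^2$. Then $$\Delta_{a/b}=\Big\{(i,j)\in\mathbb{R}^2:\ i\ge 0,\ j\ge 0,\ \frac{i}{a}+\frac{j}{b}\ge 1,\ i+j\le a+b-1\Big\}.$$
   Context: Markov polynomials. Let $x,y,z$ be indeterminates. Consider the set consisting of all rationals $\rho\in[0,1]$, each written in lowest terms $\rho=a/b$ with integers $a\ge 0$, $b\ge 1$, together with the formal symbol $1/0$. Define Laurent polynomials $M_\rho(x,y,z)$ recursively by $M_{1/0}=y$, $M_{0/1}=x$, $M_{1/1}=\frac{x^2+y^2}{z}$, and: whenever $a/b$, $c/d$ are in this set with $|ad-bc|=1$ and $(a+2c)/(b+2d)\in[0,1]$, then $M_{\frac{a+2c}{b+2d}}=\big(M_{c/d}^2+M_{\frac{a+c}{b+d}}^2\big)/M_{a/b}$. This determines $M_\rho$ for every rational $\rho\in[0,1]$. Numerator. For coprime $1\le a\le b$, $P_{a/b}(u,v,w)$ denotes the homogeneous polynomial of degree $a+b-1$ (with non-negative integer coefficients) such that $M_{a/b}(x,y,z)=P_{a/b}(x^2,y^2,z^2)/(x^{a-1}y^{b-1}z^{a+b-1})$; its existence is known. *)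

theory Defs
  imports "HOL-Analysis.Analysis"
begin

text \<open>Rationals in [0,1] in lowest terms a/b (b >= 1), together with the symbol 1/0,
  represented as pairs of naturals (a,b).\<close>
definition markov_frac :: "nat \<Rightarrow> nat \<Rightarrow> bool" where
  "markov_frac a b \<longleftrightarrow> coprime a b \<and> (a \<le> b \<or> b = 0)"

text \<open>The Markov Laurent polynomials, evaluated at positive reals x y z
  (a Laurent polynomial is determined by its values there).
  markov_rel x y z a b v  means  M_{a/b}(x,y,z) = v, following the recursive definition.\<close>
inductive markov_rel :: "real \<Rightarrow> real \<Rightarrow> real \<Rightarrow> nat \<Rightarrow> nat \<Rightarrow> real \<Rightarrow> bool"
  for x y z :: real where
  base_inf: "markov_rel x y z 1 0 y"
| base_0: "markov_rel x y z 0 1 x"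
| base_1: "markov_rel x y z 1 1 ((x\<^sup>2 + y\<^sup>2) / z)"
| step: "\<lbrakk> markov_frac a b; markov_frac c d;
           \<bar>int a * int d - int b * int c\<bar> = 1;
           a + 2 * c \<le> b + 2 * d;
           markov_rel x y z a b v1; markov_rel x y z c d v2;
           markov_rel x y z (a + c) (b + d) v3 \<rbrakk>
         \<Longrightarrow> markov_rel x y z (a + 2 * c) (b + 2 * d) ((v2\<^sup>2 + v3\<^sup>2) / v1)"

definition markov :: "nat \<Rightarrow> nat \<Rightarrow> real \<Rightarrow> real \<Rightarrow> real \<Rightarrow> real" where
  "markov a b x y z = (THE v. markov_rel x y z a b v)"

definition markov_numerator_coeffs :: "nat \<Rightarrow> nat \<Rightarrow> (nat \<Rightarrow> nat \<Rightarrow> int) \<Rightarrow> bool" where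
  "markov_numerator_coeffs a b A \<longleftrightarrow>
     (\<forall>i j. A i j \<noteq> 0 \<longrightarrow> i + j \<le> a + b - 1) \<and>
     (\<forall>x y z :: real. x > 0 \<longrightarrow> y > 0 \<longrightarrow> z > 0 \<longrightarrow>
        markov a b x y z =
          (\<Sum>(i, j) \<in> {(i, j). i + j \<le> a + b - 1}.
              of_int (A i j) * (x\<^sup>2) ^ i * (y\<^sup>2) ^ j * (z\<^sup>2) ^ (a + b - 1 - i - j))
          / (x ^ (a - 1) * y ^ (b - 1) * z ^ (a + b - 1)))"

definition newton_polygon :: "(nat \<Rightarrow> nat \<Rightarrow> int) \<Rightarrow> (real \<times> real) set" where
  "newton_polygon A = convex hull {(real i, real j) | i j. A i j \<noteq> 0}"

end

theory Submission
  imports Defs "HOL-Computational_Algebra.Polynomial_FPS"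
begin

text \<open>The step rule is equivalent to the Vieta relation \<open>M\<^sub>n = K M\<^sub>c M\<^sub>m - M\<^sub>a\<close> with
  \<open>K = (x\<^sup>2 + y\<^sup>2 + z\<^sup>2) / (x y z)\<close>, because every triple of two neighbouring fractions and
  their mediant satisfies the Markov-type equation \<open>M\<^sub>1\<^sup>2 + M\<^sub>2\<^sup>2 + M\<^sub>3\<^sup>2 = K M\<^sub>1 M\<^sub>2 M\<^sub>3\<close>.
  The Vieta relation involves no division, so the numerators are integer polynomials. Both facts
  are proved at \<open>z = 1\<close>; homogeneity recovers general \<open>z\<close>.

  For the Newton polygon, put \<open>u = t\<^sup>X\<close>, \<open>v = t\<^sup>Y\<close> (and \<open>z = 1\<close>). The step rule becomes
  \<open>P\<^sub>n P\<^sub>a = t\<^sup>a\<^sup>X\<^sup>+\<^sup>b\<^sup>Y P\<^sub>c\<^sup>2 + P\<^sub>m\<^sup>2\<close>, where both summands have positive lowest and leading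
  coefficients. By induction, the lowest and highest exponents of \<open>P\<^sub>a\<^sub>/\<^sub>b\<close> are
  \<open>min (a X) (b Y)\<close> and \<open>(a + b - 1) max X Y\<close>, the minimum and maximum of \<open>X i + Y j\<close> over
  the quadrilateral with vertices \<open>(a, 0)\<close>, \<open>(a + b - 1, 0)\<close>, \<open>(0, a + b - 1)\<close>, \<open>(0, b)\<close>.
  Weights that separate the points of the support then show that the support lies in the
  quadrilateral and contains its vertices.\<close>

section \<open>Unimodular decompositions of fractions\<close>

lemma not_markov_frac_0_0 [simp]: "\<not> markov_frac 0 0"
  by (simp add: markov_frac_def)

lemma coprime_of_det_eq_1:
  fixes a b :: nat
  assumes "\<bar>int a * D - int b * C\<bar> = 1"
  shows "coprime a b"
proof -
  have "gcd (int a) (int b) dvd \<bar>int a * D - int b * C\<bar>" by simp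
  then have "coprime (int a) (int b)" using assms by (simp add: coprime_iff_gcd_eq_1 is_unit_gcd)
  then show ?thesis by simp
qed

lemma markov_frac_mediant:
  assumes "markov_frac a b" "markov_frac c d"
    and det: "\<bar>int a * int d - int b * int c\<bar> = 1" and le: "a + 2 * c \<le> b + 2 * d"
  shows "markov_frac (a + c) (b + d)"
proof -
  have "\<bar>int (a + c) * int d - int (b + d) * int c\<bar> = 1" using det by (simp add: algebra_simps)
  then have "coprime (a + c) (b + d)" by (rule coprime_of_det_eq_1)
  moreover have "a + c \<le> b + d"
  proof (cases "b = 0 \<or> d = 0")
    case True
    then have "a = 1 \<and> b = 0 \<and> d = 1 \<or> c = 1 \<and> d = 0 \<and> b = 1"
      using assms(1,2) det by (auto simp: markov_frac_def)
    then show ?thesis using le by auto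
  next
    case False
    then show ?thesis using assms by (simp add: markov_frac_def)
  qed
  ultimately show ?thesis by (simp add: markov_frac_def)
qed

lemma dvd_range_cases:
  fixes F k :: int
  assumes "F dvd k" "0 < F" "- F < k" "k \<le> F"
  shows "k = 0 \<or> k = F"
proof -
  obtain m where m: "k = F * m" using assms(1) by (elim dvdE)
  have "- 1 < m" using assms(3) m mult_less_cancel_left_pos[OF assms(2), of "- 1" m] by simp
  moreover have "m \<le> 1" using assms(4) m mult_le_cancel_left_pos[OF assms(2), of m 1] by simp
  ultimately show ?thesis using m by (cases "m = 0") auto
qed

text \<open>With \<open>e = a + 2c\<close>, \<open>f = b + 2d\<close> one has \<open>c f - d e = \<plusminus>1\<close>; since \<open>e\<close> and \<open>f\<close> are
  coprime and \<open>0 \<le> 2d \<le> f\<close>, this equation determines \<open>(c, d)\<close>.\<close>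
lemma markov_decomposition_unique:
  assumes "markov_frac a b" "markov_frac c d" and s: "\<bar>int a * int d - int b * int c\<bar> = 1"
    and "markov_frac a' b'" "markov_frac c' d'" and s': "\<bar>int a' * int d' - int b' * int c'\<bar> = 1"
    and e: "a + 2 * c = a' + 2 * c'" and f: "b + 2 * d = b' + 2 * d'"
  shows "a = a' \<and> b = b' \<and> c = c' \<and> d = d'"
proof -
  define E F where "E = int a + 2 * int c" and "F = int b + 2 * int d"
  have a': "int a' = E - 2 * int c'" and b': "int b' = F - 2 * int d'"
    using e f unfolding E_def F_def by linarith+
  have k: "int c * F - int d * E = - (int a * int d - int b * int c)"
    "int c' * F - int d' * E = - (int a' * int d' - int b' * int c')"
    unfolding E_def F_def a' b' by (simp_all add: algebra_simps)
  have F1: "F \<ge> 1" using s unfolding F_def by (cases "b = 0 \<and> d = 0") auto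
  have "gcd F E dvd \<bar>int c * F - int d * E\<bar>" by simp
  also have "\<bar>int c * F - int d * E\<bar> = 1" using k(1) s by simp
  finally have cop: "coprime F E" by (simp add: coprime_iff_gcd_eq_1 is_unit_gcd)
  have d: "2 * int d \<le> F" "2 * int d' \<le> F" using b' unfolding F_def by auto
  have "(int c - int c') * F = (int d - int d') * E \<or> (int c + int c') * F = (int d + int d') * E"
    using k s s' by (auto simp: algebra_simps abs_if split: if_splits)
  then show ?thesis
  proof
    assume eq: "(int c - int c') * F = (int d - int d') * E"
    then have "F dvd int d - int d'" using cop by (metis coprime_dvd_mult_left_iff dvd_triv_right)
    then have "d = d'" using dvd_range_cases[of F "int d - int d'"] d F1 by auto
    with eq F1 have "c = c'" by simp
    with \<open>d = d'\<close> e f show ?thesis by simp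
  next
    assume eq: "(int c + int c') * F = (int d + int d') * E"
    then have "F dvd int d + int d'" using cop by (metis coprime_dvd_mult_left_iff dvd_triv_right)
    then have "int d + int d' = 0 \<or> int d + int d' = F" using dvd_range_cases d F1 by simp
    then show ?thesis
    proof
      assume "int d + int d' = 0"
      then have "d = 0" "c = 0" using eq F1 by auto
      then show ?thesis using assms(2) by simp
    next
      assume "int d + int d' = F"
      then have "2 * int d = F" "int c + int c' = E" using d eq F1 by (auto simp: mult.commute)
      then have "b = 0" "a = 0" using a' unfolding E_def F_def by linarith+
      then show ?thesis using assms(1) by simp
    qed
  qed
qed

lemma exists_unimodular_half:
  fixes E F :: int
  assumes "coprime E F" "F \<ge> 1"
  shows "\<exists>C D. \<bar>C * F - D * E\<bar> = 1 \<and> 0 \<le> 2 * D \<and> 2 * D \<le> F"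
proof -
  obtain u v where uv: "u * E + v * F = 1" using bezout_int[of E F] assms(1)
    by (auto simp: coprime_iff_gcd_eq_1)
  define D1 where "D1 = (- u) mod F"
  have D1r: "0 \<le> D1" "D1 < F" unfolding D1_def using assms by auto
  have "D1 = -u - F * ((-u) div F)" unfolding D1_def by (simp add: minus_div_mult_eq_mod [symmetric])
  then obtain k where k: "D1 = -u + F * k" by (metis add.commute diff_conv_add_uminus mult_minus_right)
  define C1 where "C1 = v + E * k"
  have e1: "C1 * F - D1 * E = 1" unfolding C1_def k using uv by (simp add: algebra_simps)
  show ?thesis
  proof (cases "2 * D1 \<le> F")
    case True
    then show ?thesis using e1 D1r by (intro exI[of _ C1] exI[of _ D1]) auto
  next
    case False
    have "(E - C1) * F - (F - D1) * E = -1" using e1 by (simp add: algebra_simps)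
    then show ?thesis using False D1r by (intro exI[of _ "E - C1"] exI[of _ "F - D1"]) auto
  qed
qed

lemma unimodular_half_bounds_D:
  fixes C D E F :: int
  assumes F: "F \<ge> 3" and det: "\<bar>C * F - D * E\<bar> = 1" and D: "0 \<le> 2 * D" "2 * D \<le> F"
  shows "1 \<le> D" and "2 * D < F"
proof -
  show D1: "1 \<le> D"
  proof (rule ccontr)
    assume "\<not> 1 \<le> D"
    then have "D = 0" using D by linarith
    then have "\<bar>C\<bar> * F = 1" using det F by (simp add: abs_mult)
    moreover from this have "\<bar>C\<bar> \<ge> 1" by (cases "C = 0") auto
    ultimately show False using F mult_mono[of 1 "\<bar>C\<bar>" 3 F] by simp
  qed
  show "2 * D < F"
  proof (rule ccontr)
    assume "\<not> 2 * D < F"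
    then have F2D: "F = 2 * D" using D by linarith
    then have "C * F - D * E = D * (2 * C - E)" by (simp add: algebra_simps)
    then have "D * \<bar>2 * C - E\<bar> = 1" using det D1 by (simp add: abs_mult)
    moreover from this have "\<bar>2 * C - E\<bar> \<ge> 1" by (cases "2 * C - E = 0") auto
    ultimately have "D \<le> 1" using D1 mult_left_mono[of 1 "\<bar>2 * C - E\<bar>" D] by simp
    then show False using F2D F by linarith
  qed
qed

lemma unimodular_half_bounds_C:
  fixes C D E F :: int
  assumes F: "F \<ge> 3" and E: "0 \<le> E" "E \<le> F" and det: "\<bar>C * F - D * E\<bar> = 1"
    and D: "1 \<le> D" "2 * D < F"
  shows "0 \<le> C" and "2 * C \<le> E" and "C \<le> D"
proof -
  define s where "s = C * F - D * E"
  have s: "s = 1 \<or> s = -1" using det unfolding s_def by linarith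
  show "0 \<le> C"
  proof (rule ccontr)
    assume "\<not> 0 \<le> C"
    then have "C * F \<le> -1 * F" using F by (intro mult_right_mono) auto
    moreover have "D * E \<ge> 0" using D E by simp
    ultimately show False using det F by linarith
  qed
  show "2 * C \<le> E"
  proof (rule ccontr)
    assume "\<not> 2 * C \<le> E"
    then have "2 * C * F \<ge> (E + 1) * F" using F by (intro mult_right_mono) auto
    moreover have "2 * D * E \<le> (F - 1) * E" using D E by (intro mult_right_mono) auto
    moreover have "2 * C * F = 2 * D * E + 2 * s" unfolding s_def by simp
    ultimately show False using s F E by (simp add: algebra_simps)
  qed
  show "C \<le> D"
  proof (rule ccontr)
    assume "\<not> C \<le> D"
    then have "C * F \<ge> (D + 1) * F" using F by (intro mult_right_mono) auto
    moreover have "D * E \<le> D * F" using D E by (intro mult_left_mono) auto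
    moreover have "C * F = D * E + s" unfolding s_def by simp
    ultimately show False using s F by (simp add: algebra_simps)
  qed
qed

lemma unimodular_le:
  fixes a b C D :: int
  assumes det: "\<bar>a * D - b * C\<bar> = 1" and "0 \<le> C" "C \<le> D" "1 \<le> D" "1 \<le> b"
    and le: "a + 2 * C \<le> b + 2 * D"
  shows "a \<le> b"
proof (rule ccontr)
  assume "\<not> a \<le> b"
  then have "a * D \<ge> (b + 1) * D" using assms(4) by (intro mult_right_mono) auto
  moreover have "b * (D - C) \<ge> 0" using assms(3,5) by simp
  ultimately have "a * D - b * C \<ge> b * (D - C) + D" by (simp add: algebra_simps)
  then have "D = 1" "b * (D - C) = 0" using det assms(4) \<open>b * (D - C) \<ge> 0\<close> by linarith+
  then have "C = 1" using assms(2,3,5) by simp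
  then show False using le \<open>D = 1\<close> \<open>\<not> a \<le> b\<close> by linarith
qed

text \<open>The pair is found from a solution of \<open>c f - d e = \<plusminus>1\<close> normalised to \<open>0 \<le> 2d \<le> f\<close>,
  with \<open>a = e - 2c\<close> and \<open>b = f - 2d\<close>.\<close>
lemma markov_decomposition_exists:
  assumes cop: "coprime e f" and ef: "e \<le> f" and f2: "f \<ge> 2"
  shows "\<exists>a b c d. markov_frac a b \<and> markov_frac c d \<and> \<bar>int a * int d - int b * int c\<bar> = 1 \<and>
    a + 2 * c \<le> b + 2 * d \<and> e = a + 2 * c \<and> f = b + 2 * d \<and> 1 \<le> d"
proof (cases "f = 2")
  case True
  then have "e = 1" using cop ef by (cases e) (auto simp: numeral_2_eq_2 le_Suc_eq)
  then show ?thesis using True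
    by (intro exI[of _ 1] exI[of _ 0] exI[of _ 0] exI[of _ 1]) (simp add: markov_frac_def)
next
  case False
  define E F where "E = int e" and "F = int f"
  have "F \<ge> 3" "0 \<le> E" "E \<le> F" "coprime E F" using False f2 ef cop by (simp_all add: E_def F_def)
  then obtain C D where CD: "\<bar>C * F - D * E\<bar> = 1" "0 \<le> 2 * D" "2 * D \<le> F"
    using exists_unimodular_half by (metis order.trans one_le_numeral)
  note D = unimodular_half_bounds_D[OF \<open>F \<ge> 3\<close> CD]
  note bounds = D unimodular_half_bounds_C[OF \<open>F \<ge> 3\<close> \<open>0 \<le> E\<close> \<open>E \<le> F\<close> CD(1) D]
  define a b c d where "a = e - 2 * nat C" and "b = f - 2 * nat D" and "c = nat C" and "d = nat D"
  have lift: "int c = C" "int d = D" "int a = E - 2 * C" "int b = F - 2 * D"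
    using bounds by (simp_all add: a_def b_def c_def d_def E_def F_def of_nat_diff)
  have det: "\<bar>int a * int d - int b * int c\<bar> = 1"
    using CD(1) unfolding lift by (simp add: algebra_simps abs_minus_commute)
  have "\<bar>int d * (- E) - int c * (- F)\<bar> = 1" using CD(1) unfolding lift by (simp add: algebra_simps)
  then have "coprime d c" by (rule coprime_of_det_eq_1)
  moreover have "c \<le> d" using bounds(5) unfolding lift[symmetric] by simp
  ultimately have "markov_frac c d" by (simp add: markov_frac_def coprime_commute)
  moreover have "int a \<le> int b"
    by (rule unimodular_le[OF det]) (use bounds ef in \<open>simp_all add: lift E_def F_def\<close>)
  then have "markov_frac a b"
    using coprime_of_det_eq_1[of a "int d" b "int c"] det by (simp add: markov_frac_def)
  moreover have "e = a + 2 * c" "f = b + 2 * d" "1 \<le> d" using lift bounds by (simp_all add: E_def F_def)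
  ultimately show ?thesis using det ef by blast
qed

lemma unimodular_pair_unordered:
  assumes "markov_frac p q" "markov_frac r s" "\<bar>int p * int s - int q * int r\<bar> = 1" "p < r" "s < q"
  shows "p = 0 \<and> q = 1 \<and> r = 1 \<and> s = 0"
proof -
  have "int q * int r \<ge> int q * (int p + 1)" using assms(4) by (intro mult_left_mono) auto
  moreover have "int p * int s \<le> int p * int q" using assms(5) by (intro mult_left_mono) auto
  ultimately have h: "int q * int r - int p * int s \<ge> int q" by (simp add: algebra_simps)
  have "q \<ge> 1" using assms(5) by linarith
  then have "int q * int r - int p * int s = 1" using h assms(3) by linarith
  then have q1: "q = 1" using h \<open>q \<ge> 1\<close> by linarith
  then have s0: "s = 0" using assms(5) by linarith
  then have "r = 1" using assms(2) by (simp add: markov_frac_def)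
  then have "p = 0" using assms(4) by linarith
  then show ?thesis using q1 s0 \<open>r = 1\<close> by simp
qed

lemma unimodular_pair_diff:
  assumes m1: "markov_frac p q" and m2: "markov_frac r s" and det: "\<bar>int p * int s - int q * int r\<bar> = 1"
    and rp: "r \<le> p" and sq: "s \<le> q"
  shows "markov_frac (p - r) (q - s)" "p \<le> q" "r + s \<ge> 1"
    "\<bar>int (p - r) * int s - int (q - s) * int r\<bar> = 1"
proof -
  show det2: "\<bar>int (p - r) * int s - int (q - s) * int r\<bar> = 1" using det rp sq by (simp add: of_nat_diff algebra_simps)
  show "r + s \<ge> 1" using m2 not_markov_frac_0_0 by (cases "r + s = 0") auto
  show pq: "p \<le> q"
  proof (rule ccontr)
    assume "\<not> p \<le> q"
    then have "q = 0" using m1 by (auto simp: markov_frac_def)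
    then have "p = 1" using m1 by (simp add: markov_frac_def)
    have "s = 0" using sq \<open>q = 0\<close> by simp
    then have "r = 1" using m2 by (simp add: markov_frac_def)
    then show False using det \<open>s = 0\<close> \<open>q = 0\<close> by simp
  qed
  have cop: "coprime (p - r) (q - s)" using coprime_of_det_eq_1[OF det2] .
  have "p - r \<le> q - s \<or> q - s = 0"
  proof (rule ccontr)
    assume H: "\<not> (p - r \<le> q - s \<or> q - s = 0)"
    define A where "A = int p - int r"
    define B where "B = int q - int s"
    have A1: "A \<ge> B + 1" and B1: "B \<ge> 1" using H rp sq unfolding A_def B_def by auto
    have dA: "\<bar>A * int s - B * int r\<bar> = 1" using det unfolding A_def B_def by (simp add: algebra_simps)
    show False
    proof (cases "s = 0")
      case True
      then have "r = 1" using m2 by (simp add: markov_frac_def)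
      then show False using A1 pq unfolding A_def B_def using True by linarith
    next
      case False
      then have rs: "r \<le> s" using m2 by (simp add: markov_frac_def)
      have "A * int s \<ge> (B + 1) * int s" using A1 by (intro mult_right_mono) auto
      moreover have "B * int r \<le> B * int s" using rs B1 by (intro mult_left_mono) auto
      ultimately have "A * int s - B * int r \<ge> B * (int s - int r) + int s" by (simp add: algebra_simps)
      moreover have "B * (int s - int r) \<ge> 0" using rs B1 by simp
      ultimately have "int s \<le> 1" "B * (int s - int r) \<le> 1 - int s" using dA by linarith+
      then have "s = 1" using False by linarith
      then have "B * (1 - int r) \<le> 0" using \<open>B * (int s - int r) \<le> 1 - int s\<close> by simp
      then have "1 - int r \<le> 0" using B1 by (simp add: mult_le_0_iff)
      then have "r \<ge> 1" by linarith
      then have "r = 1" using rs \<open>s = 1\<close> by linarith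
      then show False using A1 pq \<open>s = 1\<close> unfolding A_def B_def by linarith
    qed
  qed
  then show "markov_frac (p - r) (q - s)" using cop by (auto simp: markov_frac_def)
qed

lemma markov_frac_sum_pos: "markov_frac c d \<Longrightarrow> 1 \<le> c + d"
  by (cases "c + d = 0") auto

lemma markov_frac_induct [consumes 1, case_names base_1_0 base_0_1 base_1_1 step]:
  assumes "markov_frac p q" and "P 1 0" "P 0 1" "P 1 1"
    and step: "\<And>a b c d. markov_frac a b \<Longrightarrow> markov_frac c d \<Longrightarrow>
      \<bar>int a * int d - int b * int c\<bar> = 1 \<Longrightarrow> a + 2 * c \<le> b + 2 * d \<Longrightarrow>
      P a b \<Longrightarrow> P c d \<Longrightarrow> P (a + c) (b + d) \<Longrightarrow> P (a + 2 * c) (b + 2 * d)"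
  shows "P p q"
  using assms(1)
proof (induction q arbitrary: p rule: less_induct)
  case (less q)
  show ?case
  proof (cases "q \<ge> 2")
    case True
    then have "coprime p q" "p \<le> q" using less.prems by (auto simp: markov_frac_def)
    then obtain a b c d where D: "markov_frac a b" "markov_frac c d"
      "\<bar>int a * int d - int b * int c\<bar> = 1" "a + 2 * c \<le> b + 2 * d"
      "p = a + 2 * c" "q = b + 2 * d" "1 \<le> d"
      using markov_decomposition_exists True by blast
    have "P a b" "P c d" using less.IH D by simp_all
    moreover have "P (a + c) (b + d)" using less.IH D markov_frac_mediant[OF D(1-4)] by simp
    ultimately show ?thesis using step[OF D(1-4)] D(5,6) by simp
  next
    case False
    then have "q = 0 \<or> q = 1" by linarith
    then have "p = 1 \<and> q = 0 \<or> p = 0 \<and> q = 1 \<or> p = 1 \<and> q = 1"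
      using less.prems by (auto simp: markov_frac_def)
    then show ?thesis using assms(2-4) by auto
  qed
qed

section \<open>Well-definedness of the Markov polynomials\<close>

lemma markov_rel_base:
  assumes "markov_rel x y z p q v" "p \<le> 1" "q \<le> 1"
  shows "v = (if q = 0 then y else if p = 0 then x else (x\<^sup>2 + y\<^sup>2) / z)"
  using assms(1)
proof cases
  case (step a b c d)
  have False using step(1,2) assms(2,3) markov_frac_sum_pos[OF step(5)] by presburger
  then show ?thesis ..
qed simp_all

lemma markov_rel_functional:
  "markov_rel x y z p q v \<Longrightarrow> markov_rel x y z p q w \<Longrightarrow> v = w"
proof (induction arbitrary: w rule: markov_rel.induct)
  case base_inf
  then show ?case using markov_rel_base[of x y z 1 0 w] by simp
next
  case base_0
  then show ?case using markov_rel_base[of x y z 0 1 w] by simp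
next
  case base_1
  then show ?case using markov_rel_base[of x y z 1 1 w] by simp
next
  case (step a b c d v1 v2 v3)
  have not_base: "\<not> (a + 2 * c \<le> 1 \<and> b + 2 * d \<le> 1)"
    using markov_frac_sum_pos[OF step.hyps(2)] by presburger
  from step.prems show ?case
  proof cases
    case (step a' b' c' d' w1 w2 w3)
    have "a' = a" "b' = b" "c' = c" "d' = d"
      using markov_decomposition_unique[OF step.hyps(1-3) step(4-6,1-2)] by simp_all
    then have "v1 = w1" "v2 = w2" "v3 = w3"
      using step.IH(1) step.IH(2) step.IH(3) step(8-10) by simp_all
    then show ?thesis using step(3) by simp
  qed (use not_base in simp_all)
qed

lemma markov_rel_exists: "markov_frac p q \<Longrightarrow> \<exists>v. markov_rel x y z p q v"
proof (induction rule: markov_frac_induct)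
  case (step a b c d)
  then show ?case using markov_rel.step by blast
qed (use markov_rel.intros in blast)+

lemma markov_rel_markov: "markov_frac p q \<Longrightarrow> markov_rel x y z p q (markov p q x y z)"
  unfolding markov_def using markov_rel_exists markov_rel_functional by (metis theI)

lemma markov_eqI: "markov_rel x y z p q v \<Longrightarrow> markov p q x y z = v"
  unfolding markov_def using markov_rel_functional by blast

text \<open>Stated with \<open>Suc 0\<close>, the form the simplifier gives the index \<open>1\<close>.\<close>
lemma markov_1_0 [simp]: "markov (Suc 0) 0 x y z = y"
  and markov_0_1 [simp]: "markov 0 (Suc 0) x y z = x"
  and markov_1_1 [simp]: "markov (Suc 0) (Suc 0) x y z = (x\<^sup>2 + y\<^sup>2) / z"
  using markov_rel.intros(1-3)[of x y z] by (simp_all add: markov_eqI)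

lemma markov_step:
  assumes "markov_frac a b" "markov_frac c d"
    "\<bar>int a * int d - int b * int c\<bar> = 1" "a + 2 * c \<le> b + 2 * d"
  shows "markov (a + 2 * c) (b + 2 * d) x y z =
     ((markov c d x y z)\<^sup>2 + (markov (a + c) (b + d) x y z)\<^sup>2) / markov a b x y z"
  by (rule markov_eqI, rule markov_rel.step)
    (use assms markov_frac_mediant[OF assms] markov_rel_markov in auto)

lemma markov_pos:
  assumes "markov_frac p q" "x > 0" "y > 0" "z > 0"
  shows "markov p q x y z > 0"
proof -
  have "v > 0" if "markov_rel x y z p q v" for v
    using that by induction (use assms(2-4) in \<open>auto intro!: divide_pos_pos add_pos_pos\<close>)
  then show ?thesis using markov_rel_markov[OF assms(1)] by blast
qed

lemma markov_homogeneous: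
  assumes "markov_frac p q" "z \<noteq> 0"
  shows "markov p q x y z = z * markov p q (x / z) (y / z) 1"
proof -
  have "markov_rel (x / z) (y / z) 1 p q (v / z)" if "markov_rel x y z p q v" for v
    using that
  proof induction
    case base_1
    have "(x\<^sup>2 + y\<^sup>2) / z / z = ((x / z)\<^sup>2 + (y / z)\<^sup>2) / 1"
      using assms(2) by (simp add: field_simps power2_eq_square)
    then show ?case using markov_rel.base_1[of "x / z" "y / z" 1] by simp
  next
    case (step a b c d v1 v2 v3)
    have "(v2\<^sup>2 + v3\<^sup>2) / v1 / z = ((v2 / z)\<^sup>2 + (v3 / z)\<^sup>2) / (v1 / z)"
      using assms(2) by (cases "v1 = 0") (simp_all add: field_simps power2_eq_square)
    then show ?case using markov_rel.step[OF step.hyps(1-4) step.IH] by simp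
  qed (rule markov_rel.intros)+
  then have "markov p q (x / z) (y / z) 1 = markov p q x y z / z"
    using markov_eqI markov_rel_markov[OF assms(1)] by blast
  then show ?thesis using assms(2) by simp
qed

section \<open>The Markov equation and the Vieta relation\<close>

definition markov_constant :: "real \<Rightarrow> real \<Rightarrow> real" where
  "markov_constant x y = (x\<^sup>2 + y\<^sup>2 + 1) / (x * y)"

definition markov_equation :: "real \<Rightarrow> real \<Rightarrow> nat \<Rightarrow> nat \<Rightarrow> nat \<Rightarrow> nat \<Rightarrow> bool" where
  "markov_equation x y p q r s \<longleftrightarrow>
    (markov p q x y 1)\<^sup>2 + (markov r s x y 1)\<^sup>2 + (markov (p + r) (q + s) x y 1)\<^sup>2 =
      markov_constant x y * markov p q x y 1 * markov r s x y 1 * markov (p + r) (q + s) x y 1"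

lemma markov_equation_sym: "markov_equation x y p q r s \<longleftrightarrow> markov_equation x y r s p q"
  unfolding markov_equation_def by (simp add: add.commute mult.commute mult.left_commute)

lemma vieta_involution:
  fixes K \<alpha> \<beta> \<gamma> \<delta> :: real
  assumes "\<alpha> \<noteq> 0" "\<alpha>\<^sup>2 + \<beta>\<^sup>2 + \<gamma>\<^sup>2 = K * \<alpha> * \<beta> * \<gamma>" "\<delta> = (\<beta>\<^sup>2 + \<gamma>\<^sup>2) / \<alpha>"
  shows "\<delta> = K * \<beta> * \<gamma> - \<alpha>" "\<beta>\<^sup>2 + \<gamma>\<^sup>2 + \<delta>\<^sup>2 = K * \<beta> * \<gamma> * \<delta>"
proof -
  have \<delta>\<alpha>: "\<delta> * \<alpha> = \<beta>\<^sup>2 + \<gamma>\<^sup>2" using assms(1,3) by simp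
  also have "\<dots> = (K * \<beta> * \<gamma> - \<alpha>) * \<alpha>"
    using assms(2) by (simp add: algebra_simps power2_eq_square)
  finally show \<delta>: "\<delta> = K * \<beta> * \<gamma> - \<alpha>" using assms(1) by simp
  from \<delta>\<alpha> show "\<beta>\<^sup>2 + \<gamma>\<^sup>2 + \<delta>\<^sup>2 = K * \<beta> * \<gamma> * \<delta>"
    by (simp add: \<delta> algebra_simps power2_eq_square)
qed

lemma markov_equation_step:
  assumes "x > 0" "y > 0" "markov_frac p q" "markov_frac r s"
    "\<bar>int p * int s - int q * int r\<bar> = 1" "p + r \<le> q + s" "r \<le> p" "s \<le> q"
    and eq: "markov_equation x y (p - r) (q - s) r s"
  shows "markov_equation x y p q r s"
proof -
  note D = unimodular_pair_diff[OF assms(3-5,7,8)]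
  have e: "(p - r) + 2 * r = p + r" "(q - s) + 2 * s = q + s" "(p - r) + r = p" "(q - s) + r = q - s + r"
    "(q - s) + s = q" using assms(7,8) by auto
  have step: "markov (p + r) (q + s) x y 1 =
     ((markov r s x y 1)\<^sup>2 + (markov p q x y 1)\<^sup>2) / markov (p - r) (q - s) x y 1"
    using markov_step[OF D(1) assms(4) D(4), of x y 1] assms(6-8) by (simp add: e)
  have pos: "markov (p - r) (q - s) x y 1 \<noteq> 0"
    using markov_pos[OF D(1) assms(1,2) zero_less_one] by simp
  have "(markov (p - r) (q - s) x y 1)\<^sup>2 + (markov r s x y 1)\<^sup>2 + (markov p q x y 1)\<^sup>2 =
      markov_constant x y * markov (p - r) (q - s) x y 1 * markov r s x y 1 * markov p q x y 1"
    using eq by (simp add: markov_equation_def e)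
  from vieta_involution(2)[OF pos this step] show ?thesis
    unfolding markov_equation_def by (simp add: ac_simps)
qed

lemma markov_equation_base:
  assumes "x > 0" "y > 0"
  shows "markov_equation x y 0 1 1 0"
proof -
  have "x\<^sup>2 + y\<^sup>2 + (x\<^sup>2 + y\<^sup>2)\<^sup>2 = markov_constant x y * x * y * (x\<^sup>2 + y\<^sup>2)"
    using assms unfolding markov_constant_def by (simp add: field_simps power2_eq_square)
  then show ?thesis by (simp add: markov_equation_def)
qed

text \<open>Proved by descent: subtracting the smaller of two neighbours from the larger gives a
  neighbouring pair with smaller entries, and the step rule moves the equation back up.\<close>
lemma markov_equation_neighbours:
  assumes "x > 0" "y > 0"
  shows "markov_frac p q \<Longrightarrow> markov_frac r s \<Longrightarrow> \<bar>int p * int s - int q * int r\<bar> = 1 \<Longrightarrow>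
    p + r \<le> q + s \<Longrightarrow> markov_equation x y p q r s"
proof (induction "p + q + r + s" arbitrary: p q r s rule: less_induct)
  case less
  have det': "\<bar>int r * int q - int s * int p\<bar> = 1"
    using less.prems(3) by (simp add: abs_minus_commute ac_simps)
  consider "r \<le> p" "s \<le> q" | "p \<le> r" "q \<le> s" | "p < r" "s < q" | "r < p" "q < s"
    by linarith
  then show ?case
  proof cases
    case 1
    note D = unimodular_pair_diff[OF less.prems(1-3) 1]
    have "markov_equation x y (p - r) (q - s) r s"
      by (rule less.hyps) (use D less.prems 1 in auto)
    then show ?thesis by (rule markov_equation_step[OF assms less.prems 1])
  next
    case 2
    note D = unimodular_pair_diff[OF less.prems(2,1) det' 2]
    have "markov_equation x y (r - p) (s - q) p q"
      by (rule less.hyps) (use D less.prems 2 det' in auto)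
    moreover have "r + p \<le> s + q" using less.prems(4) by linarith
    ultimately have "markov_equation x y r s p q"
      using markov_equation_step[OF assms less.prems(2,1) det' _ 2] by blast
    then show ?thesis by (simp add: markov_equation_sym)
  next
    case 3
    then have "p = 0 \<and> q = 1 \<and> r = 1 \<and> s = 0" using unimodular_pair_unordered less.prems by blast
    then show ?thesis using markov_equation_base[OF assms] by simp
  next
    case 4
    then have "r = 0 \<and> s = 1 \<and> p = 1 \<and> q = 0"
      using unimodular_pair_unordered[of r s p q] less.prems det' by blast
    then show ?thesis using markov_equation_base[OF assms] markov_equation_sym by simp
  qed
qed

lemma markov_vieta:
  assumes "x > 0" "y > 0" and h: "markov_frac a b" "markov_frac c d"
    "\<bar>int a * int d - int b * int c\<bar> = 1" "a + 2 * c \<le> b + 2 * d"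
  shows "markov (a + 2 * c) (b + 2 * d) x y 1 =
    markov_constant x y * markov c d x y 1 * markov (a + c) (b + d) x y 1 - markov a b x y 1"
proof -
  have "a + c \<le> b + d"
    using markov_frac_mediant[OF h] h(3) by (cases "b + d = 0") (auto simp: markov_frac_def)
  then have "markov_equation x y a b c d" by (rule markov_equation_neighbours[OF assms(1,2) h(1-3)])
  moreover have "markov a b x y 1 \<noteq> 0" using markov_pos[OF h(1) assms(1,2) zero_less_one] by simp
  ultimately show ?thesis
    using vieta_involution(1) markov_step[OF h] unfolding markov_equation_def by blast
qed

lemma markov_vieta_scaled:
  assumes "x > 0" "y > 0" "markov_frac a b" "markov_frac c d"
    "\<bar>int a * int d - int b * int c\<bar> = 1" "a + 2 * c \<le> b + 2 * d"
  shows "markov (a + 2 * c) (b + 2 * d) x y 1 * x ^ (a + 2 * c) * y ^ (b + 2 * d) =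
    (1 + x\<^sup>2 + y\<^sup>2) / (x * y) * (markov c d x y 1 * x ^ c * y ^ d) *
      (markov (a + c) (b + d) x y 1 * x ^ (a + c) * y ^ (b + d))
    - (x\<^sup>2) ^ c * (y\<^sup>2) ^ d * (markov a b x y 1 * x ^ a * y ^ b)"
proof -
  have pw: "x ^ (a + 2 * c) = x ^ c * x ^ (a + c)" "y ^ (b + 2 * d) = y ^ d * y ^ (b + d)"
    using power_add[of x c "a + c"] power_add[of y d "b + d"] by (simp_all add: mult_2 add_ac)
  have e1: "x ^ (a + 2 * c) * y ^ (b + 2 * d) = (x ^ c * y ^ d) * (x ^ (a + c) * y ^ (b + d))"
    unfolding pw by (simp add: ac_simps)
  have e2: "x ^ (a + 2 * c) * y ^ (b + 2 * d) = (x\<^sup>2) ^ c * (y\<^sup>2) ^ d * (x ^ a * y ^ b)"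
    by (simp add: power_add power_mult[symmetric] ac_simps)
  have "markov (a + 2 * c) (b + 2 * d) x y 1 * x ^ (a + 2 * c) * y ^ (b + 2 * d) =
      markov_constant x y * markov c d x y 1 * markov (a + c) (b + d) x y 1
        * (x ^ (a + 2 * c) * y ^ (b + 2 * d))
      - markov a b x y 1 * (x ^ (a + 2 * c) * y ^ (b + 2 * d))"
    unfolding markov_vieta[OF assms] by (simp add: algebra_simps)
  also have "\<dots> = markov_constant x y * markov c d x y 1 * markov (a + c) (b + d) x y 1
        * ((x ^ c * y ^ d) * (x ^ (a + c) * y ^ (b + d)))
      - markov a b x y 1 * ((x\<^sup>2) ^ c * (y\<^sup>2) ^ d * (x ^ a * y ^ b))"
    by (subst e1, subst e2) (rule refl)
  finally show ?thesis by (simp add: markov_constant_def algebra_simps)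
qed

section \<open>Integrality of the numerators\<close>

definition poly2 :: "real poly poly \<Rightarrow> real \<Rightarrow> real \<Rightarrow> real" where
  "poly2 Q u v = poly (poly Q [:u:]) v"

definition monom2 :: "nat \<Rightarrow> nat \<Rightarrow> real poly poly" where
  "monom2 i j = monom (monom 1 j) i"

definition int_coeffs2 :: "real poly poly \<Rightarrow> bool" where
  "int_coeffs2 Q \<longleftrightarrow> (\<forall>i j. coeff (coeff Q i) j \<in> \<int>)"

definition total_degree_le :: "real poly poly \<Rightarrow> nat \<Rightarrow> bool" where
  "total_degree_le Q n \<longleftrightarrow> (\<forall>i j. coeff (coeff Q i) j \<noteq> 0 \<longrightarrow> i + j \<le> n)"

lemma poly2_simps [simp]:
  "poly2 (P + Q) u v = poly2 P u v + poly2 Q u v"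
  "poly2 (P - Q) u v = poly2 P u v - poly2 Q u v"
  "poly2 (P * Q) u v = poly2 P u v * poly2 Q u v"
  "poly2 1 u v = 1"
  "poly2 (monom2 i j) u v = u ^ i * v ^ j"
  by (simp_all add: poly2_def monom2_def poly_monom)

lemma coeff_coeff_mult:
  "coeff (coeff (P * Q) i) j =
    (\<Sum>k\<le>i. \<Sum>l\<le>j. coeff (coeff P k) l * coeff (coeff Q (i - k)) (j - l))"
  by (simp add: coeff_mult coeff_sum)

lemma coeff_coeff_monom2: "coeff (coeff (monom2 k l) i) j = (if i = k \<and> j = l then 1 else 0)"
  by (simp add: monom2_def)

lemma coeff_coeff_one: "coeff (coeff (1 :: real poly poly) i) j = (if i = 0 \<and> j = 0 then 1 else 0)"
  by (simp add: one_pCons coeff_pCons')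

lemma int_coeffs2_intros:
  "int_coeffs2 1" "int_coeffs2 (monom2 i j)"
  "int_coeffs2 P \<Longrightarrow> int_coeffs2 Q \<Longrightarrow> int_coeffs2 (P + Q)"
  "int_coeffs2 P \<Longrightarrow> int_coeffs2 Q \<Longrightarrow> int_coeffs2 (P - Q)"
  "int_coeffs2 P \<Longrightarrow> int_coeffs2 Q \<Longrightarrow> int_coeffs2 (P * Q)"
  unfolding int_coeffs2_def coeff_coeff_mult coeff_coeff_one coeff_coeff_monom2
  by (auto intro!: Ints_add Ints_diff Ints_sum Ints_mult)

lemma total_degree_le_mono: "total_degree_le P n \<Longrightarrow> n \<le> m \<Longrightarrow> total_degree_le P m"
  unfolding total_degree_le_def by force

lemma total_degree_le_intros:
  "total_degree_le 1 0" "total_degree_le (monom2 i j) (i + j)"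
  "total_degree_le P n \<Longrightarrow> total_degree_le Q n \<Longrightarrow> total_degree_le (P + Q) n"
  "total_degree_le P n \<Longrightarrow> total_degree_le Q n \<Longrightarrow> total_degree_le (P - Q) n"
  by (force simp: total_degree_le_def coeff_coeff_one coeff_coeff_monom2)+

lemma total_degree_le_mult:
  assumes P: "total_degree_le P n" and Q: "total_degree_le Q m"
  shows "total_degree_le (P * Q) (n + m)"
  unfolding total_degree_le_def
proof (intro allI impI)
  fix i j assume "coeff (coeff (P * Q) i) j \<noteq> 0"
  then obtain k l where "k \<le> i" "l \<le> j"
    "coeff (coeff P k) l \<noteq> 0" "coeff (coeff Q (i - k)) (j - l) \<noteq> 0"
    unfolding coeff_coeff_mult by (metis (no_types, lifting) atMost_iff mult_eq_0_iff sum.neutral)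
  with P Q show "i + j \<le> n + m" unfolding total_degree_le_def by fastforce
qed

text \<open>A polynomial \<open>Q(u, v)\<close> with integer coefficients and total degree \<open>\<le> p + q - 1\<close> such that
  \<open>M\<^sub>p\<^sub>/\<^sub>q(x, y, 1) = Q(x\<^sup>2, y\<^sup>2) / (x\<^sup>p\<^sup>-\<^sup>1 y\<^sup>q\<^sup>-\<^sup>1)\<close>; the equation is multiplied out so that it
  also makes sense for \<open>p = 0\<close> or \<open>q = 0\<close>.\<close>
definition markov_numerator_poly :: "nat \<Rightarrow> nat \<Rightarrow> real poly poly \<Rightarrow> bool" where
  "markov_numerator_poly p q Q \<longleftrightarrow> int_coeffs2 Q \<and> total_degree_le Q (p + q - 1) \<and>
     (\<forall>x y. x > 0 \<longrightarrow> y > 0 \<longrightarrow> markov p q x y 1 * x ^ p * y ^ q = x * y * poly2 Q (x\<^sup>2) (y\<^sup>2))"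

text \<open>By the Vieta form \<open>M\<^sub>n = K M\<^sub>c M\<^sub>m - M\<^sub>a\<close> of the step rule, the numerators satisfy
  \<open>Q\<^sub>n = (1 + u + v) Q\<^sub>c Q\<^sub>m - u\<^sup>c v\<^sup>d Q\<^sub>a\<close>, which involves no division.\<close>
lemma markov_numerator_poly_step:
  assumes h: "markov_frac a b" "markov_frac c d"
    "\<bar>int a * int d - int b * int c\<bar> = 1" "a + 2 * c \<le> b + 2 * d"
    and Qa: "markov_numerator_poly a b Qa" and Qc: "markov_numerator_poly c d Qc"
    and Qm: "markov_numerator_poly (a + c) (b + d) Qm"
  shows "markov_numerator_poly (a + 2 * c) (b + 2 * d)
    ((1 + monom2 1 0 + monom2 0 1) * Qc * Qm - monom2 c d * Qa)"
    (is "markov_numerator_poly _ _ ?Q")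
proof -
  have cd: "c + d \<ge> 1" and ab: "a + b \<ge> 1" by (rule markov_frac_sum_pos[OF h(2)] markov_frac_sum_pos[OF h(1)])+
  have "int_coeffs2 ?Q"
    using Qa Qc Qm unfolding markov_numerator_poly_def by (intro int_coeffs2_intros) auto
  moreover have "total_degree_le ?Q (a + 2 * c + (b + 2 * d) - 1)"
  proof (intro total_degree_le_intros(4))
    have "total_degree_le (1 + monom2 1 0 + monom2 0 1) 1"
      by (auto simp: total_degree_le_def coeff_coeff_one coeff_coeff_monom2)
    then have "total_degree_le ((1 + monom2 1 0 + monom2 0 1) * Qc * Qm)
        (1 + (c + d - 1) + (a + c + (b + d) - 1))"
      using Qc Qm unfolding markov_numerator_poly_def by (intro total_degree_le_mult) auto
    then show "total_degree_le ((1 + monom2 1 0 + monom2 0 1) * Qc * Qm) (a + 2 * c + (b + 2 * d) - 1)"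
      by (rule total_degree_le_mono) (use cd ab in linarith)
    have "total_degree_le (monom2 c d * Qa) ((c + d) + (a + b - 1))"
      using Qa total_degree_le_mult total_degree_le_intros(2) unfolding markov_numerator_poly_def by blast
    then show "total_degree_le (monom2 c d * Qa) (a + 2 * c + (b + 2 * d) - 1)"
      by (rule total_degree_le_mono) (use cd ab in linarith)
  qed
  moreover have "markov (a + 2 * c) (b + 2 * d) x y 1 * x ^ (a + 2 * c) * y ^ (b + 2 * d) =
      x * y * poly2 ?Q (x\<^sup>2) (y\<^sup>2)" if "x > 0" "y > 0" for x y
    using Qa Qc Qm that unfolding markov_vieta_scaled[OF that h] markov_numerator_poly_def
    by (simp add: field_simps power2_eq_square)
  ultimately show ?thesis unfolding markov_numerator_poly_def by blast
qed

lemma markov_numerator_poly_exists: "markov_frac p q \<Longrightarrow> \<exists>Q. markov_numerator_poly p q Q"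
proof (induction rule: markov_frac_induct)
  case base_1_0
  have "markov_numerator_poly 1 0 1"
    unfolding markov_numerator_poly_def by (simp add: int_coeffs2_intros total_degree_le_intros)
  then show ?case ..
next
  case base_0_1
  have "markov_numerator_poly 0 1 1"
    unfolding markov_numerator_poly_def by (simp add: int_coeffs2_intros total_degree_le_intros)
  then show ?case ..
next
  case base_1_1
  have "markov_numerator_poly 1 1 (monom2 1 0 + monom2 0 1)"
    unfolding markov_numerator_poly_def
    by (auto intro!: int_coeffs2_intros total_degree_le_intros
      simp: power2_eq_square algebra_simps total_degree_le_def coeff_coeff_monom2)
  then show ?case ..
next
  case (step a b c d)
  then show ?case using markov_numerator_poly_step by blast
qed

section \<open>Numerators as coefficient arrays\<close>

definition lattice_triangle :: "nat \<Rightarrow> (nat \<times> nat) set" where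
  "lattice_triangle n = {(i, j). i + j \<le> n}"

lemma lattice_triangle_subset: "lattice_triangle n \<subseteq> {..n} \<times> {..n}"
  by (auto simp: lattice_triangle_def)

lemma finite_lattice_triangle [simp]: "finite (lattice_triangle n)"
  using lattice_triangle_subset by (rule finite_subset) simp

definition eval_coeffs :: "nat \<Rightarrow> (nat \<Rightarrow> nat \<Rightarrow> int) \<Rightarrow> real \<Rightarrow> real \<Rightarrow> real" where
  "eval_coeffs n A u v = (\<Sum>(i, j)\<in>lattice_triangle n. of_int (A i j) * u ^ i * v ^ j)"

lemma poly_eq_sum_coeff:
  fixes p :: "'a::comm_semiring_1 poly"
  assumes "degree p \<le> n"
  shows "poly p x = (\<Sum>i\<le>n. coeff p i * x ^ i)"
proof -
  have "poly p x = poly (\<Sum>i\<le>n. monom (coeff p i) i) x"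
    by (simp only: poly_as_sum_of_monoms'[OF assms])
  then show ?thesis by (simp add: poly_sum Polynomial.poly_monom)
qed

lemma poly2_eq_eval_coeffs:
  assumes Z: "int_coeffs2 Q" and deg: "total_degree_le Q n"
  shows "poly2 Q u v = eval_coeffs n (\<lambda>i j. \<lfloor>coeff (coeff Q i) j\<rfloor>) u v"
proof -
  have deg_coeff: "degree (coeff Q i) \<le> n" for i
    using deg by (intro degree_le) (force simp: total_degree_le_def)
  have "degree Q \<le> n"
    using deg deg_coeff by (intro degree_le) (metis leading_coeff_0_iff le_trans total_degree_le_def
      le_add1 not_le)
  then have "poly2 Q u v = (\<Sum>i\<le>n. poly (coeff Q i) v * u ^ i)"
    unfolding poly2_def by (simp add: poly_eq_sum_coeff[of Q] poly_sum poly_power)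
  also have "\<dots> = (\<Sum>(i, j)\<in>{..n} \<times> {..n}. coeff (coeff Q i) j * u ^ i * v ^ j)"
    by (simp add: poly_eq_sum_coeff[OF deg_coeff] sum.cartesian_product[symmetric]
      sum_distrib_left sum_distrib_right algebra_simps)
  also have "\<dots> = (\<Sum>(i, j)\<in>lattice_triangle n. coeff (coeff Q i) j * u ^ i * v ^ j)"
    by (rule sum.mono_neutral_right) (use deg in \<open>auto simp: total_degree_le_def lattice_triangle_def\<close>)
  also have "\<dots> = eval_coeffs n (\<lambda>i j. \<lfloor>coeff (coeff Q i) j\<rfloor>) u v"
    using Z unfolding eval_coeffs_def int_coeffs2_def by (auto intro!: sum.cong elim!: Ints_cases)
  finally show ?thesis .
qed

lemma eval_coeffs_homogeneous:
  fixes x y z :: real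
  assumes "z \<noteq> 0"
  shows "(\<Sum>(i, j)\<in>lattice_triangle n. of_int (A i j) * (x\<^sup>2) ^ i * (y\<^sup>2) ^ j * (z\<^sup>2) ^ (n - i - j)) =
    (z\<^sup>2) ^ n * eval_coeffs n A ((x / z)\<^sup>2) ((y / z)\<^sup>2)"
  unfolding eval_coeffs_def sum_distrib_left
proof (rule sum.cong, simp, clarify)
  fix i j assume "(i, j) \<in> lattice_triangle n"
  then have "(z\<^sup>2) ^ n = (z\<^sup>2) ^ i * (z\<^sup>2) ^ j * (z\<^sup>2) ^ (n - i - j)"
    by (simp add: lattice_triangle_def power_add[symmetric])
  then show "of_int (A i j) * (x\<^sup>2) ^ i * (y\<^sup>2) ^ j * (z\<^sup>2) ^ (n - i - j) =
      (z\<^sup>2) ^ n * (of_int (A i j) * ((x / z)\<^sup>2) ^ i * ((y / z)\<^sup>2) ^ j)"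
    using assms by (simp add: power_divide field_simps)
qed

definition dehomogenized_numerator :: "nat \<Rightarrow> nat \<Rightarrow> (nat \<Rightarrow> nat \<Rightarrow> int) \<Rightarrow> bool" where
  "dehomogenized_numerator p q A \<longleftrightarrow> (\<forall>i j. A i j \<noteq> 0 \<longrightarrow> i + j \<le> p + q - 1) \<and>
     (\<forall>x y. x > 0 \<longrightarrow> y > 0 \<longrightarrow>
        markov p q x y 1 * x ^ p * y ^ q = x * y * eval_coeffs (p + q - 1) A (x\<^sup>2) (y\<^sup>2))"

lemma dehomogenized_numerator_of_poly:
  assumes "markov_numerator_poly p q Q"
  shows "dehomogenized_numerator p q (\<lambda>i j. \<lfloor>coeff (coeff Q i) j\<rfloor>)"
  using assms poly2_eq_eval_coeffs[of Q "p + q - 1"]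
  unfolding markov_numerator_poly_def dehomogenized_numerator_def total_degree_le_def
  by (auto dest!: spec)

lemma eq_divide_pow_iff:
  fixes x y M E :: real
  assumes "x > 0" "y > 0" "1 \<le> a" "1 \<le> b"
  shows "M = E / (x ^ (a - 1) * y ^ (b - 1)) \<longleftrightarrow> M * x ^ a * y ^ b = x * y * E"
proof -
  have "M * x ^ a * y ^ b = x * y * (M * (x ^ (a - 1) * y ^ (b - 1)))"
    using assms(3,4) by (simp add: power_eq_if)
  then show ?thesis using assms(1,2) by (auto simp: field_simps)
qed

lemma numerator_fraction_homogeneous:
  fixes x y z :: real
  assumes "z > 0" "1 \<le> a" "1 \<le> b"
  defines "n \<equiv> a + b - 1"
  shows "(\<Sum>(i, j)\<in>lattice_triangle n.
      of_int (A i j) * (x\<^sup>2) ^ i * (y\<^sup>2) ^ j * (z\<^sup>2) ^ (n - i - j)) / (x ^ (a - 1) * y ^ (b - 1) * z ^ n) =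
    z * (eval_coeffs n A ((x / z)\<^sup>2) ((y / z)\<^sup>2) / ((x / z) ^ (a - 1) * (y / z) ^ (b - 1)))"
proof -
  define W where "W = z ^ (a - 1) * z ^ (b - 1) * z ^ n"
  have "1 + (a - 1) + (b - 1) + n = 2 * n" using assms(2,3) by (simp add: n_def)
  moreover have "z * W = z ^ (1 + (a - 1) + (b - 1) + n)" by (simp add: W_def power_add)
  ultimately have zn: "(z\<^sup>2) ^ n = z * W" by (metis power_mult)
  have "x ^ (a - 1) * y ^ (b - 1) * z ^ n = (x / z) ^ (a - 1) * (y / z) ^ (b - 1) * W"
    using assms(1) by (simp add: W_def power_divide)
  then show ?thesis
    using assms(1) unfolding eval_coeffs_homogeneous[OF less_imp_neq[OF assms(1), symmetric]] zn
    by (simp add: W_def ac_simps mult_divide_mult_cancel_right)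
qed

lemma markov_numerator_coeffs_iff:
  assumes "markov_frac a b" "1 \<le> a" "1 \<le> b"
  shows "markov_numerator_coeffs a b A \<longleftrightarrow> dehomogenized_numerator a b A"
proof -
  define n where "n = a + b - 1"
  define S where "S x y z = (\<Sum>(i, j)\<in>lattice_triangle n.
    of_int (A i j) * (x\<^sup>2) ^ i * (y\<^sup>2) ^ j * (z\<^sup>2) ^ (n - i - j)) / (x ^ (a - 1) * y ^ (b - 1) * z ^ n)"
    for x y z :: real
  have S_1: "S x y 1 = eval_coeffs n A (x\<^sup>2) (y\<^sup>2) / (x ^ (a - 1) * y ^ (b - 1))" for x y
    by (simp add: S_def eval_coeffs_def)
  have S_homogeneous: "S x y z = z * S (x / z) (y / z) 1" if "z > 0" for x y z
    unfolding S_1 unfolding S_def n_def by (rule numerator_fraction_homogeneous[OF that assms(2,3)])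
  have "markov_numerator_coeffs a b A \<longleftrightarrow> (\<forall>i j. A i j \<noteq> 0 \<longrightarrow> i + j \<le> n) \<and>
      (\<forall>x y z. x > 0 \<longrightarrow> y > 0 \<longrightarrow> z > 0 \<longrightarrow> markov a b x y z = S x y z)"
    unfolding markov_numerator_coeffs_def S_def lattice_triangle_def n_def ..
  also have "\<dots> \<longleftrightarrow> (\<forall>i j. A i j \<noteq> 0 \<longrightarrow> i + j \<le> n) \<and>
      (\<forall>x y. x > 0 \<longrightarrow> y > 0 \<longrightarrow> markov a b x y 1 = S x y 1)"
  proof (intro conj_cong refl iffI allI impI)
    fix x y :: real
    assume "\<forall>x y z. x > 0 \<longrightarrow> y > 0 \<longrightarrow> z > 0 \<longrightarrow> markov a b x y z = S x y z" "x > 0" "y > 0"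
    then show "markov a b x y 1 = S x y 1" by simp
  next
    fix x y z :: real
    assume H: "\<forall>x y. x > 0 \<longrightarrow> y > 0 \<longrightarrow> markov a b x y 1 = S x y 1" "x > 0" "y > 0" "z > 0"
    have "markov a b x y z = z * markov a b (x / z) (y / z) 1"
      by (rule markov_homogeneous[OF assms(1)]) (use H(4) in simp)
    also have "\<dots> = z * S (x / z) (y / z) 1" using H by simp
    also have "\<dots> = S x y z" by (rule S_homogeneous[symmetric, OF H(4)])
    finally show "markov a b x y z = S x y z" .
  qed
  also have "\<dots> \<longleftrightarrow> dehomogenized_numerator a b A"
    unfolding dehomogenized_numerator_def S_1 n_def[symmetric] using eq_divide_pow_iff assms(2,3) by auto
  finally show ?thesis .
qed

section \<open>Lowest and leading coefficients\<close>

lemma poly_subdegree_eqI: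
  "coeff p m \<noteq> 0 \<Longrightarrow> (\<And>k. k < m \<Longrightarrow> coeff p k = 0) \<Longrightarrow> poly_subdegree p = m"
  unfolding poly_subdegree_def by (rule subdegreeI) simp_all

lemma coeff_poly_subdegree_eq_0_iff: "coeff p (poly_subdegree p) = 0 \<longleftrightarrow> p = 0"
  using nth_subdegree_zero_iff[of "fps_of_poly p"] fps_of_poly_eq_iff[of p 0]
  by (simp add: poly_subdegree_def)

lemma poly_subdegree_mult:
  fixes p q :: "'a::idom poly"
  assumes "p \<noteq> 0" "q \<noteq> 0"
  shows "poly_subdegree (p * q) = poly_subdegree p + poly_subdegree q"
    and "coeff (p * q) (poly_subdegree (p * q)) =
      coeff p (poly_subdegree p) * coeff q (poly_subdegree q)"
proof -
  have "fps_of_poly p \<noteq> 0" "fps_of_poly q \<noteq> 0"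
    using assms fps_of_poly_eq_iff[of _ 0] by auto
  then show "poly_subdegree (p * q) = poly_subdegree p + poly_subdegree q"
    and "coeff (p * q) (poly_subdegree (p * q)) =
      coeff p (poly_subdegree p) * coeff q (poly_subdegree q)"
    by (simp_all add: poly_subdegree_def fps_of_poly_mult flip: fps_of_poly_nth)
qed

lemma poly_subdegree_add_pos:
  fixes p q :: "'a::linordered_idom poly"
  assumes p: "0 < coeff p (poly_subdegree p)" and q: "0 < coeff q (poly_subdegree q)"
  shows "poly_subdegree (p + q) = min (poly_subdegree p) (poly_subdegree q)"
    and "0 < coeff (p + q) (poly_subdegree (p + q))"
proof -
  let ?m = "min (poly_subdegree p) (poly_subdegree q)"
  have nonneg: "0 \<le> coeff r ?m" if "0 < coeff r (poly_subdegree r)" "?m \<le> poly_subdegree r"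
    for r :: "'a poly"
    using that coeff_less_poly_subdegree[of ?m r] by (cases "?m = poly_subdegree r") auto
  have "0 < coeff p ?m \<or> 0 < coeff q ?m"
    using p q by (cases "poly_subdegree p \<le> poly_subdegree q") (simp_all add: min_def)
  then have pos: "0 < coeff (p + q) ?m" using nonneg[OF p] nonneg[OF q] by auto
  moreover have "coeff (p + q) k = 0" if "k < ?m" for k
    using that by (simp add: coeff_less_poly_subdegree)
  ultimately show m: "poly_subdegree (p + q) = ?m" by (intro poly_subdegree_eqI) auto
  show "0 < coeff (p + q) (poly_subdegree (p + q))" using pos by (simp add: m)
qed

lemma degree_add_pos:
  fixes p q :: "'a::linordered_idom poly"
  assumes p: "0 < lead_coeff p" and q: "0 < lead_coeff q"
  shows "degree (p + q) = max (degree p) (degree q)" and "0 < lead_coeff (p + q)"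
proof -
  consider "degree p = degree q" | "degree p < degree q" | "degree q < degree p" by linarith
  then have "degree (p + q) = max (degree p) (degree q) \<and> 0 < lead_coeff (p + q)"
  proof cases
    case 1
    then have "0 < coeff (p + q) (degree p)" using p q by simp
    moreover from this have "degree (p + q) = degree p"
      using 1 degree_add_le[of p "degree p" q] le_degree[of "p + q"] by (simp add: le_antisym)
    ultimately show ?thesis using 1 by simp
  next
    case 2
    then show ?thesis using q by (simp add: degree_add_eq_right coeff_eq_0)
  next
    case 3
    then show ?thesis using p by (simp add: degree_add_eq_left coeff_eq_0)
  qed
  then show "degree (p + q) = max (degree p) (degree q)" "0 < lead_coeff (p + q)" by blast+
qed

lemma monom_mult_square_pos:
  fixes r :: "'a::linordered_idom poly"
  assumes "r \<noteq> 0"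
  shows "poly_subdegree (monom 1 K * r\<^sup>2) = K + 2 * poly_subdegree r"
    and "0 < coeff (monom 1 K * r\<^sup>2) (poly_subdegree (monom 1 K * r\<^sup>2))"
    and "degree (monom 1 K * r\<^sup>2) = K + 2 * degree r"
    and "0 < lead_coeff (monom 1 K * r\<^sup>2)"
proof -
  have m: "monom (1 :: 'a) K \<noteq> 0" "poly_subdegree (monom (1 :: 'a) K) = K"
    by (auto intro: poly_subdegree_eqI)
  have c: "coeff r (poly_subdegree r) \<noteq> 0" using assms by (simp add: coeff_poly_subdegree_eq_0_iff)
  have rr: "r\<^sup>2 \<noteq> 0" using assms by simp
  show "poly_subdegree (monom 1 K * r\<^sup>2) = K + 2 * poly_subdegree r"
    and "0 < coeff (monom 1 K * r\<^sup>2) (poly_subdegree (monom 1 K * r\<^sup>2))"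
    using poly_subdegree_mult[OF m(1) rr] poly_subdegree_mult[OF assms assms] m(2) c
    by (simp_all add: power2_eq_square not_square_less_zero less_le)
  show "degree (monom 1 K * r\<^sup>2) = K + 2 * degree r"
    using assms by (simp add: degree_mult_eq degree_monom_eq power2_eq_square)
  show "0 < lead_coeff (monom 1 K * r\<^sup>2)"
    unfolding lead_coeff_mult lead_coeff_power lead_coeff_monom using assms by simp
qed

lemma poly_subdegree_monom [simp]: "c \<noteq> 0 \<Longrightarrow> poly_subdegree (monom c n) = n"
  by (rule poly_subdegree_eqI) auto

lemma poly_subdegree_1 [simp]: "poly_subdegree 1 = 0"
  by (rule poly_subdegree_eqI) auto

lemma poly_eqI_pos:
  fixes p q :: "real poly"
  assumes "\<And>t. t > 0 \<Longrightarrow> poly p t = poly q t"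
  shows "p = q"
proof (rule ccontr)
  assume "p \<noteq> q"
  then have "finite {t. poly (p - q) t = 0}" by (intro poly_roots_finite) simp
  moreover have "{0<..} \<subseteq> {t. poly (p - q) t = 0}" using assms by auto
  ultimately show False using infinite_Ioi finite_subset by blast
qed

section \<open>Weighted specialisations of the numerator\<close>

text \<open>The substitution \<open>u = t\<^sup>X\<close>, \<open>v = t\<^sup>Y\<close> in the numerator: its exponents are the weights
  \<open>X i + Y j\<close> of the points of the support.\<close>
definition weighted_poly :: "nat \<Rightarrow> (nat \<Rightarrow> nat \<Rightarrow> int) \<Rightarrow> nat \<Rightarrow> nat \<Rightarrow> real poly" where
  "weighted_poly n A X Y = (\<Sum>(i, j)\<in>lattice_triangle n. monom (of_int (A i j)) (X * i + Y * j))"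

lemma poly_weighted_poly: "poly (weighted_poly n A X Y) t = eval_coeffs n A (t ^ X) (t ^ Y)"
  unfolding weighted_poly_def eval_coeffs_def poly_sum
  by (rule sum.cong) (auto simp: Polynomial.poly_monom power_add power_mult[symmetric] ac_simps)

lemma coeff_weighted_poly:
  "coeff (weighted_poly n A X Y) k =
    (\<Sum>(i, j)\<in>lattice_triangle n. if X * i + Y * j = k then of_int (A i j) else 0)"
  unfolding weighted_poly_def coeff_sum by (rule sum.cong) auto

lemma weighted_poly_eq:
  fixes X Y :: nat
  assumes "dehomogenized_numerator p q A" "t > 0"
  defines "x \<equiv> sqrt (t ^ X)" and "y \<equiv> sqrt (t ^ Y)"
  shows "markov p q x y 1 * x ^ p * y ^ q = x * y * poly (weighted_poly (p + q - 1) A X Y) t"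
proof -
  have "x\<^sup>2 = t ^ X" "y\<^sup>2 = t ^ Y" "x > 0" "y > 0" using assms(2) by (simp_all add: x_def y_def)
  then show ?thesis using assms(1) by (simp add: poly_weighted_poly dehomogenized_numerator_def)
qed

lemma weighted_poly_recurrence:
  assumes h: "markov_frac a b" "markov_frac c d"
    "\<bar>int a * int d - int b * int c\<bar> = 1" "a + 2 * c \<le> b + 2 * d"
    and An: "dehomogenized_numerator (a + 2 * c) (b + 2 * d) An"
    and Aa: "dehomogenized_numerator a b Aa" and Ac: "dehomogenized_numerator c d Ac"
    and Am: "dehomogenized_numerator (a + c) (b + d) Am"
  shows "weighted_poly (a + 2 * c + (b + 2 * d) - 1) An X Y * weighted_poly (a + b - 1) Aa X Y =
    monom 1 (a * X + b * Y) * (weighted_poly (c + d - 1) Ac X Y)\<^sup>2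
      + (weighted_poly (a + c + (b + d) - 1) Am X Y)\<^sup>2"
    (is "?Pn * ?Pa = monom 1 ?K * ?Pc\<^sup>2 + ?Pm\<^sup>2")
proof (rule poly_eqI_pos)
  fix t :: real assume t: "t > 0"
  define x where "x = sqrt (t ^ X)"
  define y where "y = sqrt (t ^ Y)"
  have xy: "x > 0" "y > 0" "x\<^sup>2 = t ^ X" "y\<^sup>2 = t ^ Y" using t by (simp_all add: x_def y_def)
  note eq = weighted_poly_eq[where X = X and Y = Y, OF _ t, folded x_def y_def]
  define W where "W = (x ^ (a + 2 * c) * x ^ a) * (y ^ (b + 2 * d) * y ^ b)"
  have W: "W = (x ^ c)\<^sup>2 * (y ^ d)\<^sup>2 * ((x\<^sup>2) ^ a * (y\<^sup>2) ^ b)" "W = (x ^ (a + c))\<^sup>2 * (y ^ (b + d))\<^sup>2"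
    unfolding W_def by (simp_all add: power_add[symmetric] power_mult[symmetric] algebra_simps)
  have "markov (a + 2 * c) (b + 2 * d) x y 1 * markov a b x y 1 =
      (markov c d x y 1)\<^sup>2 + (markov (a + c) (b + d) x y 1)\<^sup>2"
    using markov_step[OF h] markov_pos[OF h(1) xy(1,2) zero_less_one] by simp
  then have "markov (a + 2 * c) (b + 2 * d) x y 1 * markov a b x y 1 * W =
      (markov c d x y 1)\<^sup>2 * W + (markov (a + c) (b + d) x y 1)\<^sup>2 * W"
    by (simp add: algebra_simps)
  then have "(markov (a + 2 * c) (b + 2 * d) x y 1 * x ^ (a + 2 * c) * y ^ (b + 2 * d)) *
      (markov a b x y 1 * x ^ a * y ^ b) =
      (markov c d x y 1 * x ^ c * y ^ d)\<^sup>2 * ((x\<^sup>2) ^ a * (y\<^sup>2) ^ b) +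
      (markov (a + c) (b + d) x y 1 * x ^ (a + c) * y ^ (b + d))\<^sup>2"
    by (subst (asm) W(1), subst (asm) W(2), subst (asm) W_def) (simp add: power_mult_distrib ac_simps)
  from this[unfolded eq[OF An] eq[OF Aa] eq[OF Ac] eq[OF Am]]
  have "(x * y)\<^sup>2 * (poly ?Pn t * poly ?Pa t) =
      (x * y)\<^sup>2 * ((poly ?Pc t)\<^sup>2 * ((x\<^sup>2) ^ a * (y\<^sup>2) ^ b) + (poly ?Pm t)\<^sup>2)"
    by (simp add: power_mult_distrib power2_eq_square algebra_simps)
  then show "poly (?Pn * ?Pa) t = poly (monom 1 ?K * ?Pc\<^sup>2 + ?Pm\<^sup>2) t"
    using xy by (simp add: Polynomial.poly_monom power_add power_mult[symmetric] ac_simps)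
qed

lemma weighted_poly_1_0: "dehomogenized_numerator 1 0 A \<Longrightarrow> weighted_poly 0 A X Y = 1"
  by (rule poly_eqI_pos) (use weighted_poly_eq[of 1 0 A] in simp)

lemma weighted_poly_0_1: "dehomogenized_numerator 0 1 A \<Longrightarrow> weighted_poly 0 A X Y = 1"
  by (rule poly_eqI_pos) (use weighted_poly_eq[of 0 1 A] in simp)

lemma weighted_poly_1_1:
  "dehomogenized_numerator 1 1 A \<Longrightarrow> weighted_poly 1 A X Y = monom 1 X + monom 1 Y"
  by (rule poly_eqI_pos) (use weighted_poly_eq[of 1 1 A] in \<open>simp add: Polynomial.poly_monom\<close>)

lemma min_weight_identity:
  fixes A B C D :: nat
  shows "min (A + 2 * C) (B + 2 * D) + min A B = min (A + B + 2 * min C D) (2 * min (A + C) (B + D))"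
  by (simp add: min_def)

lemma max_weight_identity:
  fixes a b c d X Y :: nat
  assumes "1 \<le> c + d" "1 \<le> a + b"
  shows "max (a * X + b * Y + 2 * ((c + d - 1) * max X Y)) (2 * ((a + c + (b + d) - 1) * max X Y)) =
    (a + 2 * c + (b + 2 * d) - 1) * max X Y + (a + b - 1) * max X Y"
proof -
  define r s M where "r = a + b - 1" and "s = c + d - 1" and "M = max X Y"
  have "a * X + b * Y \<le> (a + b) * M"
    by (simp add: M_def add_mult_distrib add_mono mult_le_mono2)
  moreover have "a + b = r + 1" using assms(2) by (simp add: r_def)
  ultimately have "a * X + b * Y \<le> (r + 1) * M" by simp
  moreover have "a + c + (b + d) - 1 = r + s + 1" "a + 2 * c + (b + 2 * d) - 1 = r + 2 * s + 2"
    using assms by (simp_all add: r_def s_def)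
  ultimately show ?thesis
    unfolding M_def[symmetric] s_def[symmetric] r_def[symmetric] by (simp add: algebra_simps max_def)
qed

definition extremal_degrees :: "nat \<Rightarrow> nat \<Rightarrow> nat \<Rightarrow> nat \<Rightarrow> real poly \<Rightarrow> bool" where
  "extremal_degrees p q X Y P \<longleftrightarrow>
    P \<noteq> 0 \<and> poly_subdegree P = min (p * X) (q * Y) \<and> degree P = (p + q - 1) * max X Y"

text \<open>Both summands on the right of the recurrence have positive lowest and leading coefficients,
  so no cancellation occurs and the extreme degrees of \<open>P\<^sub>n\<close> can be read off.\<close>
lemma extremal_degrees_step:
  assumes "1 \<le> a + b" "1 \<le> c + d"
    and rec: "Pn * Pa = monom 1 (a * X + b * Y) * Pc\<^sup>2 + Pm\<^sup>2"
    and Pa: "extremal_degrees a b X Y Pa" and Pc: "extremal_degrees c d X Y Pc"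
    and Pm: "extremal_degrees (a + c) (b + d) X Y Pm"
  shows "extremal_degrees (a + 2 * c) (b + 2 * d) X Y Pn"
proof -
  define K where "K = a * X + b * Y"
  note rec = rec[folded K_def]
  have nz: "Pa \<noteq> 0" "Pc \<noteq> 0" "Pm \<noteq> 0" using Pa Pc Pm by (simp_all add: extremal_degrees_def)
  note sq_c = monom_mult_square_pos[OF nz(2), of K]
  note sq_m = monom_mult_square_pos[OF nz(3), of 0, unfolded monom_eq_1 mult_1_left]
  have "monom 1 K * Pc\<^sup>2 + Pm\<^sup>2 \<noteq> 0"
    using poly_subdegree_add_pos(2)[OF sq_c(2) sq_m(2)] by (metis coeff_0 less_irrefl)
  then have Pn: "Pn \<noteq> 0" using rec by auto
  have "poly_subdegree Pn + min (a * X) (b * Y) =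
      min (K + 2 * min (c * X) (d * Y)) (2 * min ((a + c) * X) ((b + d) * Y))"
    using poly_subdegree_mult(1)[OF Pn nz(1)] rec poly_subdegree_add_pos(1)[OF sq_c(2) sq_m(2)]
      sq_c(1) sq_m(1) Pa Pc Pm by (simp add: extremal_degrees_def)
  moreover have "min ((a + 2 * c) * X) ((b + 2 * d) * Y) + min (a * X) (b * Y) =
      min (K + 2 * min (c * X) (d * Y)) (2 * min ((a + c) * X) ((b + d) * Y))"
    unfolding K_def add_mult_distrib mult.assoc by (rule min_weight_identity)
  ultimately have "poly_subdegree Pn = min ((a + 2 * c) * X) ((b + 2 * d) * Y)" by linarith
  moreover have "degree Pn + (a + b - 1) * max X Y =
      max (K + 2 * ((c + d - 1) * max X Y)) (2 * ((a + c + (b + d) - 1) * max X Y))"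
    using degree_mult_eq[OF Pn nz(1)] rec degree_add_pos(1)[OF sq_c(4) sq_m(4)] sq_c(3) sq_m(3)
      Pa Pc Pm by (simp add: extremal_degrees_def)
  then have "degree Pn = (a + 2 * c + (b + 2 * d) - 1) * max X Y"
    using max_weight_identity[OF assms(2,1), of X Y] unfolding K_def by linarith
  ultimately show ?thesis using Pn by (simp add: extremal_degrees_def)
qed

lemma dehomogenized_numerator_exists: "markov_frac p q \<Longrightarrow> \<exists>A. dehomogenized_numerator p q A"
  using markov_numerator_poly_exists dehomogenized_numerator_of_poly by blast

lemma weighted_poly_degrees:
  assumes "markov_frac p q" "dehomogenized_numerator p q A"
  shows "extremal_degrees p q X Y (weighted_poly (p + q - 1) A X Y)"
  using assms
proof (induction arbitrary: A rule: markov_frac_induct)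
  case base_1_0
  then show ?case by (simp add: weighted_poly_1_0 extremal_degrees_def)
next
  case base_0_1
  then show ?case by (simp add: weighted_poly_0_1 extremal_degrees_def)
next
  case base_1_1
  have "0 < coeff (monom (1 :: real) Z) (poly_subdegree (monom (1 :: real) Z))"
    "0 < lead_coeff (monom (1 :: real) Z)" for Z
    by (simp_all add: degree_monom_eq)
  then show ?case
    using weighted_poly_1_1[OF base_1_1] poly_subdegree_add_pos[of "monom 1 X" "monom 1 Y"]
      degree_add_pos[of "monom 1 X" "monom 1 Y"]
    by (auto simp: extremal_degrees_def degree_monom_eq)
next
  case (step a b c d)
  obtain Aa Ac Am where A: "dehomogenized_numerator a b Aa" "dehomogenized_numerator c d Ac"
    "dehomogenized_numerator (a + c) (b + d) Am"
    using dehomogenized_numerator_exists step.hyps(1,2) markov_frac_mediant[OF step.hyps] by meson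
  show ?case
    by (rule extremal_degrees_step[OF markov_frac_sum_pos[OF step.hyps(1)]
      markov_frac_sum_pos[OF step.hyps(2)] weighted_poly_recurrence[OF step.hyps step.prems A]
      step.IH(1)[OF A(1)] step.IH(2)[OF A(2)] step.IH(3)[OF A(3)]])
qed

section \<open>The support of the numerator\<close>

lemma coeff_weighted_poly_unique:
  assumes "i + j \<le> n"
    and "\<And>i' j'. i' + j' \<le> n \<Longrightarrow> X * i' + Y * j' = X * i + Y * j \<Longrightarrow> i' = i \<and> j' = j"
  shows "coeff (weighted_poly n A X Y) (X * i + Y * j) = of_int (A i j)"
proof -
  let ?f = "\<lambda>(i', j'). if X * i' + Y * j' = X * i + Y * j then (of_int (A i' j') :: real) else 0"
  have "(i, j) \<in> lattice_triangle n" using assms(1) by (simp add: lattice_triangle_def)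
  then have "sum ?f (lattice_triangle n) = ?f (i, j) + sum ?f (lattice_triangle n - {(i, j)})"
    by (simp add: sum.remove)
  also have "sum ?f (lattice_triangle n - {(i, j)}) = 0"
    using assms(2) by (intro sum.neutral) (auto simp: lattice_triangle_def split: if_splits)
  finally show ?thesis by (simp add: coeff_weighted_poly)
qed

lemma coeff_weighted_poly_nonzero:
  assumes "coeff (weighted_poly n A X Y) k \<noteq> 0"
  obtains i j where "i + j \<le> n" "X * i + Y * j = k" "A i j \<noteq> 0"
proof -
  have "\<exists>i j. i + j \<le> n \<and> X * i + Y * j = k \<and> A i j \<noteq> 0"
  proof (rule ccontr)
    assume "\<not> ?thesis"
    then have "coeff (weighted_poly n A X Y) k = 0"
      unfolding coeff_weighted_poly by (intro sum.neutral) (auto simp: lattice_triangle_def)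
    with assms show False by contradiction
  qed
  with that show ?thesis by blast
qed

lemma mult_add_less_inject:
  fixes N s s' i i' :: nat
  assumes "i < N" "i' < N" "N * s + i = N * s' + i'"
  shows "i = i'" and "s = s'"
proof -
  have "(N * s + i) mod N = i" "(N * s' + i') mod N = i'" using assms(1,2) by simp_all
  then show "i = i'" using assms(3) by metis
  then show "s = s'" using assms by simp
qed

lemma mult_add_less_eq_multD:
  fixes N s s' i :: nat
  assumes "N * s + i = N * s'" "i < N"
  shows "i = 0" and "s = s'"
  using mult_add_less_inject[of i N 0 s s'] assms by simp_all

lemma mult_le_mult_add_less:
  fixes N x y i :: nat
  assumes "N * x \<le> N * y + i" "i < N"
  shows "x \<le> y"
proof (rule ccontr)
  assume "\<not> x \<le> y"
  then have "N * (y + 1) \<le> N * x" by (intro mult_le_mono2) simp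
  with assms show False by simp
qed

lemma weighted_poly_extreme_coeffs:
  fixes X Y :: nat
  assumes "markov_frac p q" "dehomogenized_numerator p q A"
  defines "P \<equiv> weighted_poly (p + q - 1) A X Y"
  shows "k < min (p * X) (q * Y) \<Longrightarrow> coeff P k = 0"
    and "coeff P (min (p * X) (q * Y)) \<noteq> 0"
    and "coeff P ((p + q - 1) * max X Y) \<noteq> 0"
proof -
  have P: "P \<noteq> 0" "poly_subdegree P = min (p * X) (q * Y)" "degree P = (p + q - 1) * max X Y"
    using weighted_poly_degrees[OF assms(1,2), of X Y] by (simp_all add: extremal_degrees_def P_def)
  show "k < min (p * X) (q * Y) \<Longrightarrow> coeff P k = 0"
    using P(2) coeff_less_poly_subdegree[of k P] by simp
  show "coeff P (min (p * X) (q * Y)) \<noteq> 0" using P(1,2) coeff_poly_subdegree_eq_0_iff[of P] by simp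
  show "coeff P ((p + q - 1) * max X Y) \<noteq> 0" using P(1,3) leading_coeff_0_iff[of P] by simp
qed

text \<open>The weights below are chosen so that the weight \<open>X i + Y j\<close> of a point of the support,
  e.g. \<open>N (b i + a j) + i\<close> with \<open>N > a + b - 1 \<ge> i\<close>, determines the point; the extreme
  exponents of the weighted polynomial then locate support points of the numerator.\<close>
lemma markov_numerator_above_line:
  assumes "markov_frac a b" "1 \<le> a" and A: "dehomogenized_numerator a b A" and "A i j \<noteq> 0"
  shows "a * b \<le> b * i + a * j"
proof -
  define N where "N = a + b"
  have ij: "i + j \<le> a + b - 1" using A assms(4) by (simp add: dehomogenized_numerator_def)
  then have "i < N" using assms(2) by (simp add: N_def)
  have w: "(N * b + 1) * i' + N * a * j' = N * (b * i' + a * j') + i'" for i' j'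
    by (simp add: algebra_simps)
  have min: "min (a * (N * b + 1)) (b * (N * a)) = N * (a * b)" by (simp add: min_def algebra_simps)
  have "coeff (weighted_poly (a + b - 1) A (N * b + 1) (N * a)) ((N * b + 1) * i + N * a * j) =
      of_int (A i j)"
  proof (rule coeff_weighted_poly_unique[OF ij])
    fix i' j' assume h: "i' + j' \<le> a + b - 1" "(N * b + 1) * i' + N * a * j' = (N * b + 1) * i + N * a * j"
    have "i' < N" using h(1) assms(2) by (simp add: N_def)
    moreover have "N * (b * i' + a * j') + i' = N * (b * i + a * j) + i" using h(2) unfolding w .
    ultimately have "i' = i" "b * i' + a * j' = b * i + a * j" using \<open>i < N\<close> by (auto dest: mult_add_less_inject)
    then show "i' = i \<and> j' = j" using assms(2) by simp
  qed
  then have "\<not> (N * b + 1) * i + N * a * j < N * (a * b)"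
    using weighted_poly_extreme_coeffs(1)[OF assms(1,3), of _ "N * b + 1" "N * a"] assms(4)
    unfolding min by force
  then have "N * (a * b) \<le> N * (b * i + a * j) + i" unfolding w by simp
  then show ?thesis using \<open>i < N\<close> by (rule mult_le_mult_add_less)
qed

lemma markov_numerator_low_vertices:
  assumes "markov_frac a b" "1 \<le> a" "1 \<le> b" and A: "dehomogenized_numerator a b A"
  shows "A 0 b \<noteq> 0" and "A a 0 \<noteq> 0"
proof -
  define N where "N = a + b"
  have N: "i < N" "j < N" if "i + j \<le> a + b - 1" for i j using that assms(2) by (simp_all add: N_def)
  have "min (a * (N * b + 1)) (b * (N * a)) = N * (a * b)" by (simp add: min_def algebra_simps)
  then obtain i j where ij: "i + j \<le> a + b - 1" "(N * b + 1) * i + N * a * j = N * (a * b)" "A i j \<noteq> 0"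
    using weighted_poly_extreme_coeffs(2)[OF assms(1,4), of "N * b + 1" "N * a"]
    by (auto elim: coeff_weighted_poly_nonzero)
  have "N * (b * i + a * j) + i = N * (a * b)" using ij(2) by (simp add: algebra_simps)
  then have "i = 0" "b * i + a * j = a * b" using N(1)[OF ij(1)] by (rule mult_add_less_eq_multD)+
  then show "A 0 b \<noteq> 0" using ij(3) assms(2) by simp
  have "min (a * (N * b)) (b * (N * a + 1)) = N * (a * b)" by (simp add: min_def algebra_simps)
  then obtain i j where ij: "i + j \<le> a + b - 1" "N * b * i + (N * a + 1) * j = N * (a * b)" "A i j \<noteq> 0"
    using weighted_poly_extreme_coeffs(2)[OF assms(1,4), of "N * b" "N * a + 1"]
    by (auto elim: coeff_weighted_poly_nonzero)
  have "N * (b * i + a * j) + j = N * (a * b)" using ij(2) by (simp add: algebra_simps)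
  then have "j = 0" "b * i + a * j = a * b" using N(2)[OF ij(1)] by (rule mult_add_less_eq_multD)+
  then show "A a 0 \<noteq> 0" using ij(3) assms(3) by simp
qed

lemma markov_numerator_high_vertices:
  assumes "markov_frac a b" "1 \<le> a" and A: "dehomogenized_numerator a b A"
  shows "A (a + b - 1) 0 \<noteq> 0" and "A 0 (a + b - 1) \<noteq> 0"
proof -
  define n N where "n = a + b - 1" and "N = a + b"
  have N: "i < N" "j < N" if "i + j \<le> n" for i j using that assms(2) by (simp_all add: n_def N_def)
  have "max N 1 = N" "max 1 N = N" using assms(2) by (simp_all add: N_def)
  then obtain i j i' j' where ij: "i + j \<le> n" "N * i + 1 * j = n * N" "A i j \<noteq> 0"
    and ij': "i' + j' \<le> n" "1 * i' + N * j' = n * N" "A i' j' \<noteq> 0"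
    using weighted_poly_extreme_coeffs(3)[OF assms(1,3), of N 1]
      weighted_poly_extreme_coeffs(3)[OF assms(1,3), of 1 N]
    unfolding n_def[symmetric] by (metis coeff_weighted_poly_nonzero)
  have "N * i + j = N * n" using ij(2) by simp
  then have "j = 0" "i = n" using N(2)[OF ij(1)] by (rule mult_add_less_eq_multD)+
  then show "A (a + b - 1) 0 \<noteq> 0" using ij(3) by (simp add: n_def)
  have "N * j' + i' = N * n" using ij'(2) by (simp add: add.commute)
  then have "i' = 0" "j' = n" using N(1)[OF ij'(1)] by (rule mult_add_less_eq_multD)+
  then show "A 0 (a + b - 1) \<noteq> 0" using ij'(3) by (simp add: n_def)
qed

section \<open>The Newton polygon\<close>

lemma convex_pair_combination:
  fixes C :: "(real \<times> real) set"
  assumes "convex C" "(x1, y1) \<in> C" "(x2, y2) \<in> C" "0 \<le> t" "t \<le> 1"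
  shows "((1 - t) * x1 + t * x2, (1 - t) * y1 + t * y2) \<in> C"
  using convexD_alt[OF assms] by simp

lemma convex_horizontal_segment:
  fixes C :: "(real \<times> real) set"
  assumes "convex C" "(x1, y) \<in> C" "(x2, y) \<in> C" "x1 \<le> x" "x \<le> x2"
  shows "(x, y) \<in> C"
proof -
  have "x \<in> closed_segment x1 x2" using assms(4,5) by (simp add: closed_segment_eq_real_ivl)
  then obtain t where t: "0 \<le> t" "t \<le> 1" "x = (1 - t) * x1 + t * x2"
    by (auto simp: closed_segment_def)
  then have "((1 - t) * x1 + t * x2, (1 - t) * y + t * y) \<in> C"
    by (intro convex_pair_combination[OF assms(1-3)])
  moreover have "(1 - t) * y + t * y = y" by (simp add: algebra_simps)
  ultimately show ?thesis using t(3) by simp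
qed

lemma convex_markov_polygon:
  "convex {(i :: real, j :: real). i \<ge> 0 \<and> j \<ge> 0 \<and> i / a + j / b \<ge> 1 \<and> i + j \<le> r}"
proof -
  have "{(i :: real, j :: real). i \<ge> 0 \<and> j \<ge> 0 \<and> i / a + j / b \<ge> 1 \<and> i + j \<le> r} =
      {p. inner (1, 0) p \<ge> 0} \<inter> {p. inner (0, 1) p \<ge> 0} \<inter>
      {p. inner (1 / a, 1 / b) p \<ge> 1} \<inter> {p. inner (1, 1) p \<le> r}"
    by (auto simp: inner_Pair)
  then show ?thesis
    by (simp only: convex_Int convex_halfspace_ge convex_halfspace_le)
qed

lemma markov_polygon_subset_convex:
  fixes a b r :: real and C :: "(real \<times> real) set"
  assumes C: "convex C" and ab: "0 < a" "0 < b" "a \<le> r" "b \<le> r"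
    and V: "(a, 0) \<in> C" "(r, 0) \<in> C" "(0, r) \<in> C" "(0, b) \<in> C"
  shows "{(x, y). x \<ge> 0 \<and> y \<ge> 0 \<and> x / a + y / b \<ge> 1 \<and> x + y \<le> r} \<subseteq> C"
proof clarify
  fix x y assume xy: "x \<ge> 0" "y \<ge> 0" "x / a + y / b \<ge> 1" "x + y \<le> r"
  define s where "s = y / r"
  have "0 \<le> s" "s \<le> 1" using xy ab by (simp_all add: s_def divide_le_eq)
  then have "((1 - s) * r + s * 0, (1 - s) * 0 + s * r) \<in> C"
    by (intro convex_pair_combination[OF C V(2,3)])
  moreover have "s * r = y" using ab by (simp add: s_def)
  ultimately have right: "(r - y, y) \<in> C" by (simp add: algebra_simps)
  show "(x, y) \<in> C"
  proof (cases "y \<le> b")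
    case True
    define u where "u = y / b"
    have "0 \<le> u" "u \<le> 1" using xy True ab by (simp_all add: u_def divide_le_eq)
    then have "((1 - u) * a + u * 0, (1 - u) * 0 + u * b) \<in> C"
      by (intro convex_pair_combination[OF C V(1,4)])
    moreover have "u * b = y" using ab by (simp add: u_def)
    ultimately have left: "((1 - u) * a, y) \<in> C" by simp
    have "1 - u \<le> x / a" using xy(3) unfolding u_def by linarith
    then have "(1 - u) * a \<le> x" using ab by (simp add: le_divide_eq)
    moreover have "x \<le> r - y" using xy(4) by linarith
    ultimately show ?thesis by (rule convex_horizontal_segment[OF C left right])
  next
    case False
    define t where "t = (y - b) / (r - b)"
    have rb: "r - b > 0" using xy False by linarith
    have "(1 - t) * b + t * r = b + t * (r - b)" by (simp add: algebra_simps)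
    also have "\<dots> = y" using rb by (simp add: t_def)
    finally have ty: "(1 - t) * b + t * r = y" .
    have "0 \<le> t" "t \<le> 1" using xy False rb by (simp_all add: t_def divide_le_eq)
    then have "((1 - t) * 0 + t * 0, (1 - t) * b + t * r) \<in> C"
      by (intro convex_pair_combination[OF C V(4,3)])
    then have left: "(0, y) \<in> C" unfolding ty by simp
    show ?thesis by (rule convex_horizontal_segment[OF C left right]) (use xy in linarith)+
  qed
qed

lemma newton_polygon_eqI:
  fixes a b :: nat and A :: "nat \<Rightarrow> nat \<Rightarrow> int"
  assumes ab: "1 \<le> a" "1 \<le> b"
    and above: "\<And>i j. A i j \<noteq> 0 \<Longrightarrow> a * b \<le> b * i + a * j"
    and below: "\<And>i j. A i j \<noteq> 0 \<Longrightarrow> i + j \<le> a + b - 1"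
    and vertices: "A a 0 \<noteq> 0" "A (a + b - 1) 0 \<noteq> 0" "A 0 (a + b - 1) \<noteq> 0" "A 0 b \<noteq> 0"
  shows "newton_polygon A =
    {(i :: real, j :: real). i \<ge> 0 \<and> j \<ge> 0 \<and> i / real a + j / real b \<ge> 1
      \<and> i + j \<le> real a + real b - 1}"
    (is "_ = ?Q")
proof
  have r: "real (a + b - 1) = real a + real b - 1" using ab by (simp add: of_nat_diff)
  show "newton_polygon A \<subseteq> ?Q"
    unfolding newton_polygon_def
  proof (rule hull_minimal)
    show "{(real i, real j) | i j. A i j \<noteq> 0} \<subseteq> ?Q"
    proof clarify
      fix i j assume "A i j \<noteq> 0"
      then have "real a * real b \<le> real b * real i + real a * real j"
        "real i + real j \<le> real a + real b - 1"
        using above below r by (metis of_nat_add of_nat_le_iff of_nat_mult)+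
      then show "real i \<ge> 0 \<and> real j \<ge> 0 \<and> real i / a + real j / b \<ge> 1 \<and>
          real i + real j \<le> real a + real b - 1"
        using ab by (simp add: field_simps)
    qed
  qed (rule convex_markov_polygon)
  have in_hull: "(real i, real j) \<in> newton_polygon A" if "A i j \<noteq> 0" for i j
    unfolding newton_polygon_def using that by (intro hull_inc) blast
  show "?Q \<subseteq> newton_polygon A"
    by (rule markov_polygon_subset_convex)
      (use ab in_hull[OF vertices(1)] in_hull[OF vertices(2)] in_hull[OF vertices(3)]
        in_hull[OF vertices(4)] r in \<open>simp_all add: newton_polygon_def\<close>)
qed

theorem theorem3p2:
  fixes a b :: nat
  assumes "1 \<le> a" and "a \<le> b" and "coprime a b"
  shows "(\<exists>A. markov_numerator_coeffs a b A) \<and>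
         (\<forall>A. markov_numerator_coeffs a b A \<longrightarrow>
            newton_polygon A =
              {(i :: real, j :: real). i \<ge> 0 \<and> j \<ge> 0 \<and> i / real a + j / real b \<ge> 1
                 \<and> i + j \<le> real a + real b - 1})"
proof (intro conjI allI impI)
  have frac: "markov_frac a b" and b: "1 \<le> b"
    using assms by (simp_all add: markov_frac_def)
  note numerator_iff = markov_numerator_coeffs_iff[OF frac assms(1) b]
  obtain Q where "markov_numerator_poly a b Q" using markov_numerator_poly_exists[OF frac] ..
  then show "\<exists>A. markov_numerator_coeffs a b A"
    using dehomogenized_numerator_of_poly numerator_iff by blast
  fix A assume "markov_numerator_coeffs a b A"
  then have A: "dehomogenized_numerator a b A" using numerator_iff by blast
  then have "A i j \<noteq> 0 \<Longrightarrow> i + j \<le> a + b - 1" for i j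
    by (simp add: dehomogenized_numerator_def)
  with markov_numerator_above_line[OF frac assms(1) A] markov_numerator_low_vertices[OF frac assms(1) b A]
    markov_numerator_high_vertices[OF frac assms(1) A]
  show "newton_polygon A = {(i :: real, j :: real). i \<ge> 0 \<and> j \<ge> 0 \<and>
      i / real a + j / real b \<ge> 1 \<and> i + j \<le> real a + real b - 1}"
    by (intro newton_polygon_eqI[OF assms(1) b]) auto
qed

end
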